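(* Let $U=(E,\mathcal{D},\rho)$ be a U-matroid with lattice of flats $\L$. Let $\mathcal{D}'\subseteq\mathcal{D}$ be an accessible distributive sublattice, and let $\L'$ be the lattice of flats of the restriction $(E,\mathcal{D}',\rho|_{\mathcal{D}'})$. Then \[\L'=\{\inf_{\mathcal{D}'}(A): A\in\L\}.\]
   Context: An accessible distributive lattice on a finite set $E$ is a family $\mathcal{D}\subseteq 2^E$ containing $\emptyset$ and $E$, closed under union and intersection, such that every nonempty $A\in\mathcal{D}$ contains some $x$ with $A\setminus\{x\}\in\mathcal{D}$. A U-matroid is a triple $(E,\mathcal{D},\rho)$ with $\rho:\mathcal{D}\to\mathbb{N}$ satisfying $\rho(\emptyset)=0$; $\rho(A)\le\rho(B)$ whenever $A\subseteq B$; $\rho(A)+\rho(B)\ge\rho(A\cup B)+\rho(A\cap B)$; and $\rho(A\cup\{e\})-\rho(A)\le1$ whenever $A,A\cup\{e\}\in\mathcal{D}$. The lattice of flats of $(E,\mathcal{D},\rho)$ is $\L=\{A\in\mathcal{D}:\rho(B)>\rho(A)\text{ for all }B\in\mathcal{D}\text{ with }B\supsetneq A\}$. For $A\subseteq E$, $\inf_{\mathcal{D}'}(A)=\bigcup\{B\in\mathcal{D}':B\subseteq A\}$. *)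

theory Defs
  imports Main
begin

definition accessible_distributive_lattice :: "'a set \<Rightarrow> 'a set set \<Rightarrow> bool" where
  "accessible_distributive_lattice E D \<longleftrightarrow>
     finite E \<and> D \<subseteq> Pow E \<and> {} \<in> D \<and> E \<in> D \<and>
     (\<forall>A\<in>D. \<forall>B\<in>D. A \<union> B \<in> D \<and> A \<inter> B \<in> D) \<and>
     (\<forall>A\<in>D. A \<noteq> {} \<longrightarrow> (\<exists>x\<in>A. A - {x} \<in> D))"

definition U_matroid :: "'a set \<Rightarrow> 'a set set \<Rightarrow> ('a set \<Rightarrow> nat) \<Rightarrow> bool" where
  "U_matroid E D \<rho> \<longleftrightarrow>
     accessible_distributive_lattice E D \<and>
     \<rho> {} = 0 \<and>
     (\<forall>A\<in>D. \<forall>B\<in>D. A \<subseteq> B \<longrightarrow> \<rho> A \<le> \<rho> B) \<and>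
     (\<forall>A\<in>D. \<forall>B\<in>D. \<rho> A + \<rho> B \<ge> \<rho> (A \<union> B) + \<rho> (A \<inter> B)) \<and>
     (\<forall>A\<in>D. \<forall>e. A \<union> {e} \<in> D \<longrightarrow> \<rho> (A \<union> {e}) \<le> \<rho> A + 1)"

definition flats :: "'a set set \<Rightarrow> ('a set \<Rightarrow> nat) \<Rightarrow> 'a set set" where
  "flats D \<rho> = {A \<in> D. \<forall>B\<in>D. A \<subset> B \<longrightarrow> \<rho> B > \<rho> A}"

definition inf_in :: "'a set set \<Rightarrow> 'a set \<Rightarrow> 'a set" where
  "inf_in D' A = \<Union>{B \<in> D'. B \<subseteq> A}"

end

theory Submission
  imports Defs
begin

text \<open>
  Write \<open>Y = inf_in D' F\<close>, the largest member of \<open>D'\<close> inside \<open>F\<close>.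
  If \<open>F\<close> is a flat of \<open>D\<close> and \<open>B \<in> D'\<close> properly contains \<open>Y\<close>, then \<open>B \<not>\<subseteq> F\<close>, so
  \<open>\<rho> (B \<union> F) > \<rho> F\<close>, while \<open>\<rho> (B \<inter> F) \<ge> \<rho> Y\<close>; submodularity gives \<open>\<rho> B > \<rho> Y\<close>,
  so \<open>Y\<close> is a flat of \<open>D'\<close>. Conversely a flat \<open>X\<close> of \<open>D'\<close> lies in a maximal
  \<open>F \<in> D\<close> of the same rank, which is a flat of \<open>D\<close>; then \<open>X \<subseteq> Y \<subseteq> F\<close> forces
  \<open>\<rho> Y = \<rho> X\<close> and hence \<open>X = Y\<close>.
\<close>

lemma accessible_distributive_lattice_finite:
  "accessible_distributive_lattice E D \<Longrightarrow> finite D"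
  unfolding accessible_distributive_lattice_def by (auto intro: finite_subset)

lemma Union_mem_if_union_closed:
  assumes "finite S" "S \<subseteq> D" "{} \<in> D" "\<And>A B. A \<in> D \<Longrightarrow> B \<in> D \<Longrightarrow> A \<union> B \<in> D"
  shows "\<Union>S \<in> D"
  using assms by (induction S rule: finite_induct) auto

lemma inf_in_mem:
  assumes "finite D" "{} \<in> D" "\<And>A B. A \<in> D \<Longrightarrow> B \<in> D \<Longrightarrow> A \<union> B \<in> D"
  shows "inf_in D A \<in> D"
  unfolding inf_in_def using assms by (intro Union_mem_if_union_closed) auto

lemma accessible_distributive_lattice_closed:
  "accessible_distributive_lattice E D \<Longrightarrow> A \<in> D \<Longrightarrow> B \<in> D \<Longrightarrow> A \<union> B \<in> D \<and> A \<inter> B \<in> D"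
  unfolding accessible_distributive_lattice_def by blast

lemma inf_in_mem_lattice:
  assumes "accessible_distributive_lattice E D"
  shows "inf_in D A \<in> D"
proof (rule inf_in_mem)
  show "finite D"
    using assms by (rule accessible_distributive_lattice_finite)
  show "{} \<in> D"
    using assms unfolding accessible_distributive_lattice_def by blast
  show "A \<union> B \<in> D" if "A \<in> D" "B \<in> D" for A B
    using accessible_distributive_lattice_closed[OF assms that] by blast
qed

lemma inf_in_subset: "inf_in D A \<subseteq> A"
  unfolding inf_in_def by auto

lemma subset_inf_in: "X \<in> D \<Longrightarrow> X \<subseteq> A \<Longrightarrow> X \<subseteq> inf_in D A"
  unfolding inf_in_def by auto

lemma U_matroid_lattice: "U_matroid E D \<rho> \<Longrightarrow> accessible_distributive_lattice E D"
  unfolding U_matroid_def by simp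

lemma U_matroid_mono:
  "U_matroid E D \<rho> \<Longrightarrow> A \<in> D \<Longrightarrow> B \<in> D \<Longrightarrow> A \<subseteq> B \<Longrightarrow> \<rho> A \<le> \<rho> B"
  unfolding U_matroid_def by blast

lemma U_matroid_submodular:
  "U_matroid E D \<rho> \<Longrightarrow> A \<in> D \<Longrightarrow> B \<in> D \<Longrightarrow> \<rho> (A \<union> B) + \<rho> (A \<inter> B) \<le> \<rho> A + \<rho> B"
  unfolding U_matroid_def by blast

lemma flatsI: "F \<in> D \<Longrightarrow> (\<And>B. B \<in> D \<Longrightarrow> F \<subset> B \<Longrightarrow> \<rho> F < \<rho> B) \<Longrightarrow> F \<in> flats D \<rho>"
  unfolding flats_def by blast

lemma flatsD: "F \<in> flats D \<rho> \<Longrightarrow> B \<in> D \<Longrightarrow> F \<subset> B \<Longrightarrow> \<rho> F < \<rho> B"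
  unfolding flats_def by blast

lemma flats_memD: "F \<in> flats D \<rho> \<Longrightarrow> F \<in> D"
  unfolding flats_def by blast

lemma exists_flat_superset_same_rank:
  assumes "finite D" "X \<in> D"
    and mono: "\<And>A B. A \<in> D \<Longrightarrow> B \<in> D \<Longrightarrow> A \<subseteq> B \<Longrightarrow> \<rho> A \<le> \<rho> B"
  obtains F where "F \<in> flats D \<rho>" "X \<subseteq> F" "\<rho> F = \<rho> X"
proof -
  define S where "S = {B \<in> D. X \<subseteq> B \<and> \<rho> B = \<rho> X}"
  have "finite S" "X \<in> S"
    using assms(1,2) unfolding S_def by auto
  then obtain F where "F \<in> S" and F_max: "\<forall>B\<in>S. F \<subseteq> B \<longrightarrow> F = B"
    using finite_has_maximal by blast
  then have F: "F \<in> D" "X \<subseteq> F" "\<rho> F = \<rho> X"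
    unfolding S_def by auto
  have "F \<in> flats D \<rho>"
  proof (rule flatsI[OF F(1)])
    fix B assume B: "B \<in> D" "F \<subset> B"
    then have "B \<notin> S"
      using F_max by blast
    then have "\<rho> B \<noteq> \<rho> F"
      using B F unfolding S_def by auto
    moreover have "\<rho> F \<le> \<rho> B"
      using mono[OF F(1) B(1)] B(2) by simp
    ultimately show "\<rho> F < \<rho> B"
      by simp
  qed
  then show thesis
    using F(2,3) by (rule that)
qed

lemma flat_eq_inf_in_of_same_rank:
  assumes "X \<in> flats D' \<rho>" "F \<in> D" "X \<subseteq> F" "\<rho> F = \<rho> X"
    and "D' \<subseteq> D" "inf_in D' F \<in> D'"
    and mono: "\<And>A B. A \<in> D \<Longrightarrow> B \<in> D \<Longrightarrow> A \<subseteq> B \<Longrightarrow> \<rho> A \<le> \<rho> B"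
  shows "X = inf_in D' F"
proof (rule ccontr)
  let ?Y = "inf_in D' F"
  assume "X \<noteq> ?Y"
  moreover have "X \<subseteq> ?Y"
    using flats_memD[OF assms(1)] assms(3) by (rule subset_inf_in)
  ultimately have "\<rho> X < \<rho> ?Y"
    using flatsD[OF assms(1,6)] by blast
  moreover have "?Y \<in> D"
    using assms(5,6) by blast
  then have "\<rho> ?Y \<le> \<rho> F"
    using assms(2) inf_in_subset by (rule mono)
  ultimately show False
    using assms(4) by simp
qed

lemma inf_in_flat_mem_flats:
  assumes "F \<in> flats D \<rho>" "D' \<subseteq> D" "inf_in D' F \<in> D'"
    and lattice: "\<And>A B. A \<in> D \<Longrightarrow> B \<in> D \<Longrightarrow> A \<union> B \<in> D \<and> A \<inter> B \<in> D"
    and mono: "\<And>A B. A \<in> D \<Longrightarrow> B \<in> D \<Longrightarrow> A \<subseteq> B \<Longrightarrow> \<rho> A \<le> \<rho> B"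
    and submod: "\<And>A B. A \<in> D \<Longrightarrow> B \<in> D \<Longrightarrow> \<rho> (A \<union> B) + \<rho> (A \<inter> B) \<le> \<rho> A + \<rho> B"
  shows "inf_in D' F \<in> flats D' \<rho>"
proof -
  let ?Y = "inf_in D' F"
  have F: "F \<in> D"
    using assms(1) by (rule flats_memD)
  show ?thesis
  proof (rule flatsI[OF assms(3)])
    fix B assume B: "B \<in> D'" "?Y \<subset> B"
    have BD: "B \<in> D"
      using B(1) assms(2) by blast
    have BF: "B \<union> F \<in> D" "B \<inter> F \<in> D"
      using lattice[OF BD F] by auto
    have "\<not> B \<subseteq> F"
      using subset_inf_in[OF B(1), of F] B(2) by blast
    then have "F \<subset> B \<union> F"
      by blast
    with assms(1) BF(1) have "\<rho> F < \<rho> (B \<union> F)"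
      by (rule flatsD)
    moreover have "\<rho> ?Y \<le> \<rho> (B \<inter> F)"
    proof (rule mono)
      show "?Y \<in> D"
        using assms(2,3) by blast
      show "?Y \<subseteq> B \<inter> F"
        using B(2) inf_in_subset[of D' F] by blast
    qed (rule BF(2))
    ultimately show "\<rho> ?Y < \<rho> B"
      using submod[OF BD F] by linarith
  qed
qed

theorem theorem4p20:
  fixes E :: "'a set" and D D' :: "'a set set" and \<rho> :: "'a set \<Rightarrow> nat"
  assumes "U_matroid E D \<rho>"
    and "D' \<subseteq> D"
    and "accessible_distributive_lattice E D'"
  shows "flats D' \<rho> = inf_in D' ` flats D \<rho>"
proof -
  have D: "accessible_distributive_lattice E D"
    using assms(1) by (rule U_matroid_lattice)
  note mono = U_matroid_mono[OF assms(1)]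
  note submod = U_matroid_submodular[OF assms(1)]
  note lattice = accessible_distributive_lattice_closed[OF D]
  have inf_mem: "inf_in D' A \<in> D'" for A
    using assms(3) by (rule inf_in_mem_lattice)
  have "X \<in> inf_in D' ` flats D \<rho>" if X: "X \<in> flats D' \<rho>" for X
  proof -
    have "X \<in> D"
      using flats_memD[OF X] assms(2) by blast
    then obtain F where F: "F \<in> flats D \<rho>" "X \<subseteq> F" "\<rho> F = \<rho> X"
      by (rule exists_flat_superset_same_rank[where \<rho> = \<rho>, OF accessible_distributive_lattice_finite[OF D] _ mono])
    have "X = inf_in D' F"
      by (rule flat_eq_inf_in_of_same_rank[OF X flats_memD[OF F(1)] F(2,3) assms(2) inf_mem mono])
    with F(1) show ?thesis
      by (rule rev_image_eqI)
  qed
  moreover have "inf_in D' F \<in> flats D' \<rho>" if "F \<in> flats D \<rho>" for F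
    using inf_in_flat_mem_flats[OF that assms(2) inf_mem lattice mono submod] .
  ultimately show ?thesis
    by blast
qed

end
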